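(* Fix a node $n$ of the control flow graph and regard its extractor functions as functions of their inputs: $\mathit{Def}(a)$, $\mathit{Kill}(a)$, $\mathit{Pointee}(a)$ (with $A$ replaced by $a$) and $\mathit{Ref}(l,a)$ (with $A$ replaced by $a$ and $\mathit{Lout}_n$ replaced by $l$), for $l \subseteq \mathbf{P}$ and $a \subseteq \mathbf{P}\times\mathbf{V}$. Define $$f_L(l,a) = (l - \mathit{Kill}(a)) \cup \mathit{Ref}(l,a),\qquad f_A(l,a) = \Big(\big(a - (\mathit{Kill}(a)\times \mathbf{V})\big)\cup\big(\mathit{Def}(a)\times \mathit{Pointee}(a)\big)\Big)\Big|_{l}.$$ Then $f_L$ and $f_A$ are monotonic with respect to the data-flow order: for all $l_1,l_2\subseteq\mathbf{P}$ and $a_1,a_2\subseteq \mathbf{P}\times\mathbf{V}$ with $l_1\supseteq l_2$ and $a_1\supseteq a_2$, we have $f_L(l_1,a_1)\supseteq f_L(l_2,a_2)$ and $f_A(l_1,a_1)\supseteq f_A(l_2,a_2)$.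
   Context: $\mathbf{V}$ is a finite set of variables, $\mathbf{P}\subseteq\mathbf{V}$ the set of pointer variables, and $\mathbf{V}\setminus\mathbf{P}$ contains a special element $?$ (undefined location). Every node (statement) is of one of the forms: "use $x$", "$x=\&a$", "$x=y$", "$x=*y$", "$*x=y$", or "other", where $x,y\in\mathbf{P}$, $a\in\mathbf{V}$. Relation notation for $R\subseteq\mathbf{P}\times\mathbf{V}$ and a set $X$: $R\,X=\{v\mid u\in X,\ (u,v)\in R\}$; $R|_X=\{(u,v)\in R\mid u\in X\}$; $R^2=\{(u,w)\mid (u,v)\in R,\ (v,w)\in R\}$ (so necessarily $v\in\mathbf{P}$). $\mathit{Must}(R)=\bigcup_{x\in\mathbf{P}}\{x\}\times M_x$, where $M_x=\mathbf{V}$ if $R|_{\{x\}}=\emptyset$ or $R|_{\{x\}}=\{(x,?)\}$; $M_x=\{y\}$ if $R|_{\{x\}}=\{(x,y)\}$ with $y\neq ?$; and $M_x=\emptyset$ otherwise. Extractor functions of node $n$, given a points-to relation $A\subseteq\mathbf{P}\times\mathbf{V}$ and a set $L\subseteq\mathbf{P}$ (in the analysis $A=\mathit{Ain}_n$, $L=\mathit{Lout}_n$): - use $x$: $\mathit{Def}=\emptyset$, $\mathit{Kill}=\emptyset$, $\mathit{Ref}=\{x\}$, $\mathit{Pointee}=\emptyset$. - $x=\&a$: $\mathit{Def}=\{x\}$, $\mathit{Kill}=\{x\}$, $\mathit{Ref}=\emptyset$, $\mathit{Pointee}=\{a\}$. - $x=y$: $\mathit{Def}=\{x\}$, $\mathit{Kill}=\{x\}$,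 $\mathit{Ref}=\{y\}$ if $\mathit{Def}\cap L\neq\emptyset$ and $\emptyset$ otherwise, $\mathit{Pointee}=A\{y\}$. - $x=*y$: $\mathit{Def}=\{x\}$, $\mathit{Kill}=\{x\}$, $\mathit{Ref}=\{y\}\cup\big((A\{y\})\cap\mathbf{P}\big)$ if $\mathit{Def}\cap L\neq\emptyset$ and $\emptyset$ otherwise, $\mathit{Pointee}=A^2\{y\}$. - $*x=y$: $\mathit{Def}=(A\{x\})\cap\mathbf{P}$, $\mathit{Kill}=(\mathit{Must}(A)\{x\})\cap\mathbf{P}$, $\mathit{Ref}=\{x,y\}$ if $\mathit{Def}\cap L\neq\emptyset$ and $\{x\}$ otherwise, $\mathit{Pointee}=A\{y\}$. - other: all four are $\emptyset$. *)

theory Defs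
  imports Main
begin

text \<open>Variables are of type 'v. The finite variable set V, the pointer variables P \<subseteq> V
  and the undefined location q (written ? in the paper, q \<in> V - P) are explicit parameters.\<close>

datatype 'v node =
    Use 'v
  | AddrOf 'v 'v      (* x = &a *)
  | Copy 'v 'v        (* x = y *)
  | Load 'v 'v        (* x = *y *)
  | Store 'v 'v       (* *x = y *)
  | Other

definition setting :: "'v set \<Rightarrow> 'v set \<Rightarrow> 'v \<Rightarrow> bool" where
  "setting V P q \<longleftrightarrow> finite V \<and> P \<subseteq> V \<and> q \<in> V - P"

fun wf_node :: "'v set \<Rightarrow> 'v set \<Rightarrow> 'v node \<Rightarrow> bool" where
  "wf_node V P (Use x) = (x \<in> P)"
| "wf_node V P (AddrOf x a) = (x \<in> P \<and> a \<in> V)"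
| "wf_node V P (Copy x y) = (x \<in> P \<and> y \<in> P)"
| "wf_node V P (Load x y) = (x \<in> P \<and> y \<in> P)"
| "wf_node V P (Store x y) = (x \<in> P \<and> y \<in> P)"
| "wf_node V P Other = True"

text \<open>R X = R `` X (relational image); restriction R|_X; R^2 = R O R.\<close>
definition restr :: "('v \<times> 'v) set \<Rightarrow> 'v set \<Rightarrow> ('v \<times> 'v) set" where
  "restr R X = {(u, v) \<in> R. u \<in> X}"

definition MustM :: "'v set \<Rightarrow> 'v \<Rightarrow> ('v \<times> 'v) set \<Rightarrow> 'v \<Rightarrow> 'v set" where
  "MustM V q R x =
     (if restr R {x} = {} \<or> restr R {x} = {(x, q)} then V
      else if \<exists>y. y \<noteq> q \<and> restr R {x} = {(x, y)} then {THE y. restr R {x} = {(x, y)}}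
      else {})"

definition Must :: "'v set \<Rightarrow> 'v set \<Rightarrow> 'v \<Rightarrow> ('v \<times> 'v) set \<Rightarrow> ('v \<times> 'v) set" where
  "Must V P q R = (\<Union>x\<in>P. {x} \<times> MustM V q R x)"

fun Def :: "'v set \<Rightarrow> 'v node \<Rightarrow> ('v \<times> 'v) set \<Rightarrow> 'v set" where
  "Def P (Use x) A = {}"
| "Def P (AddrOf x a) A = {x}"
| "Def P (Copy x y) A = {x}"
| "Def P (Load x y) A = {x}"
| "Def P (Store x y) A = (A `` {x}) \<inter> P"
| "Def P Other A = {}"

fun Kill :: "'v set \<Rightarrow> 'v set \<Rightarrow> 'v \<Rightarrow> 'v node \<Rightarrow> ('v \<times> 'v) set \<Rightarrow> 'v set" where
  "Kill V P q (Use x) A = {}"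
| "Kill V P q (AddrOf x a) A = {x}"
| "Kill V P q (Copy x y) A = {x}"
| "Kill V P q (Load x y) A = {x}"
| "Kill V P q (Store x y) A = (Must V P q A `` {x}) \<inter> P"
| "Kill V P q Other A = {}"

fun Ref :: "'v set \<Rightarrow> 'v node \<Rightarrow> 'v set \<Rightarrow> ('v \<times> 'v) set \<Rightarrow> 'v set" where
  "Ref P (Use x) L A = {x}"
| "Ref P (AddrOf x a) L A = {}"
| "Ref P (Copy x y) L A = (if Def P (Copy x y) A \<inter> L \<noteq> {} then {y} else {})"
| "Ref P (Load x y) L A =
     (if Def P (Load x y) A \<inter> L \<noteq> {} then {y} \<union> ((A `` {y}) \<inter> P) else {})"
| "Ref P (Store x y) L A = (if Def P (Store x y) A \<inter> L \<noteq> {} then {x, y} else {x})"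
| "Ref P Other L A = {}"

fun Pointee :: "'v node \<Rightarrow> ('v \<times> 'v) set \<Rightarrow> 'v set" where
  "Pointee (Use x) A = {}"
| "Pointee (AddrOf x a) A = {a}"
| "Pointee (Copy x y) A = A `` {y}"
| "Pointee (Load x y) A = (A O A) `` {y}"
| "Pointee (Store x y) A = A `` {y}"
| "Pointee Other A = {}"

definition fL :: "'v set \<Rightarrow> 'v set \<Rightarrow> 'v \<Rightarrow> 'v node \<Rightarrow> 'v set \<Rightarrow> ('v \<times> 'v) set \<Rightarrow> 'v set" where
  "fL V P q n l a = (l - Kill V P q n a) \<union> Ref P n l a"

definition fA :: "'v set \<Rightarrow> 'v set \<Rightarrow> 'v \<Rightarrow> 'v node \<Rightarrow> 'v set \<Rightarrow> ('v \<times> 'v) set \<Rightarrow> ('v \<times> 'v) set" where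
  "fA V P q n l a =
     restr ((a - (Kill V P q n a \<times> V)) \<union> (Def P n a \<times> Pointee n a)) l"

end

theory Submission
  imports Defs
begin

text \<open>
  Both functions are built from the extractors Def, Kill, Ref and Pointee by
  set difference, union, product and restriction. Union, product and restriction
  are monotone in every argument and a difference is monotone in its left and
  antitone in its right argument. So the theorem follows once we know that
  Def, Pointee and Ref grow when their inputs grow, and that Kill shrinks when the
  points-to relation grows. Only the Kill part takes work: for a store "*x = y" it
  is given by the must-points-to relation, and adding points-to pairs can only turn
  a definite target of x into an ambiguous one.
\<close>

lemma restr_singleton: "restr R {x} = {x} \<times> (R `` {x})"
  unfolding restr_def by auto

lemma MustM_image:
  "MustM V q R x =
     (if R `` {x} \<subseteq> {q} then V
      else if \<exists>y. y \<noteq> q \<and> R `` {x} = {y} then R `` {x}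
      else {})"
proof -
  have trivial: "restr R {x} = {} \<or> restr R {x} = {(x, q)} \<longleftrightarrow> R `` {x} \<subseteq> {q}"
    unfolding restr_singleton by auto
  have single: "restr R {x} = {(x, y)} \<longleftrightarrow> R `` {x} = {y}" for y
    unfolding restr_singleton by auto
  show ?thesis
  proof (cases "\<exists>y. y \<noteq> q \<and> R `` {x} = {y}")
    case True
    then obtain y where y: "y \<noteq> q" "R `` {x} = {y}" by blast
    then have "(THE y. R `` {x} = {y}) = y" by (intro the_equality) auto
    with y True show ?thesis
      unfolding MustM_def trivial unfolding single by simp
  next
    case False
    show ?thesis
      unfolding MustM_def trivial unfolding single by (simp only: if_not_P[OF False])
  qed
qed

lemma MustM_trivial: "R `` {x} \<subseteq> {q} \<Longrightarrow> MustM V q R x = V"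
  unfolding MustM_image by (rule if_P)

lemma MustM_single: "y \<noteq> q \<Longrightarrow> R `` {x} = {y} \<Longrightarrow> MustM V q R x = {y}"
  unfolding MustM_image by auto

text \<open>Adding points-to pairs can only shrink the set of must-targets. Each possible
  target must lie in V, because the trivial case yields all of V.\<close>
lemma MustM_antimono:
  assumes "a2 \<subseteq> a1" and "a1 `` {x} \<subseteq> V"
  shows "MustM V q a1 x \<subseteq> MustM V q a2 x"
proof -
  have sub: "a2 `` {x} \<subseteq> a1 `` {x}" using assms(1) by auto
  show ?thesis
  proof (cases "a1 `` {x} \<subseteq> {q}")
    case True
    with sub have "a2 `` {x} \<subseteq> {q}" by blast
    with True show ?thesis by (simp add: MustM_trivial)
  next
    case not_trivial: False
    show ?thesis
    proof (cases "\<exists>y. y \<noteq> q \<and> a1 `` {x} = {y}")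
      case True
      then obtain y where y: "y \<noteq> q" "a1 `` {x} = {y}" by blast
      with assms(2) have "y \<in> V" by blast
      from y sub have "a2 `` {x} = {} \<or> a2 `` {x} = {y}"
        by (metis subset_singletonD)
      then have "{y} \<subseteq> MustM V q a2 x"
        using \<open>y \<in> V\<close> y(1) by (auto simp: MustM_trivial MustM_single)
      with y show ?thesis by (simp add: MustM_single)
    next
      case False
      have "MustM V q a1 x = {}"
        unfolding MustM_image if_not_P[OF not_trivial] if_not_P[OF False] ..
      then show ?thesis by simp
    qed
  qed
qed

lemma Kill_antimono:
  assumes "a2 \<subseteq> a1" and "Range a1 \<subseteq> V"
  shows "Kill V P q n a1 \<subseteq> Kill V P q n a2"
proof (cases n)
  case (Store x y)
  have "a1 `` {x} \<subseteq> V" using assms(2) by auto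
  then have "MustM V q a1 x \<subseteq> MustM V q a2 x"
    by (rule MustM_antimono[OF assms(1)])
  then have "Must V P q a1 `` {x} \<subseteq> Must V P q a2 `` {x}"
    unfolding Must_def by blast
  with Store show ?thesis by auto
qed auto

lemma Def_mono: "a2 \<subseteq> a1 \<Longrightarrow> Def P n a2 \<subseteq> Def P n a1"
  by (cases n) auto

lemma Pointee_mono: "a2 \<subseteq> a1 \<Longrightarrow> Pointee n a2 \<subseteq> Pointee n a1"
  by (cases n) auto

text \<open>Ref is monotone in both the liveness set and the points-to relation, because
  its guard "Def meets L" is monotone in both.\<close>
lemma Ref_mono:
  assumes "l2 \<subseteq> l1" and "a2 \<subseteq> a1"
  shows "Ref P n l2 a2 \<subseteq> Ref P n l1 a1"
  using assms by (cases n) auto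

theorem theorem1:
  fixes V P :: "'v set" and q :: 'v and n :: "'v node"
    and l1 l2 :: "'v set" and a1 a2 :: "('v \<times> 'v) set"
  assumes "setting V P q"
    and "wf_node V P n"
    and "l1 \<subseteq> P" and "l2 \<subseteq> P"
    and "a1 \<subseteq> P \<times> V" and "a2 \<subseteq> P \<times> V"
    and "l2 \<subseteq> l1" and "a2 \<subseteq> a1"
  shows "fL V P q n l2 a2 \<subseteq> fL V P q n l1 a1 \<and> fA V P q n l2 a2 \<subseteq> fA V P q n l1 a1"
proof -
  have "Range a1 \<subseteq> V" using assms(5) by auto
  then have kill: "Kill V P q n a1 \<subseteq> Kill V P q n a2"
    by (rule Kill_antimono[OF assms(8)])
  note def = Def_mono[OF assms(8), of P n]
    and pointee = Pointee_mono[OF assms(8), of n]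
    and ref = Ref_mono[OF assms(7,8), of P n]
  have "fL V P q n l2 a2 \<subseteq> fL V P q n l1 a1"
    unfolding fL_def using kill ref assms(7) by blast
  moreover have "fA V P q n l2 a2 \<subseteq> fA V P q n l1 a1"
    unfolding fA_def restr_def using kill def pointee assms(7,8) by blast
  ultimately show ?thesis ..
qed

end
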